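(* Let $\mu>0$, $\lambda\in(0,1)$, $a_{b1},a_{b2}\in[-1,1]$ and $b>0$. Consider a single agent moving according to the closed-loop dynamics of Configuration I (see context), and call a state a circling equilibrium if $\rho_{1b1},\rho_{1b2}>0$, the agent is not collinear with the two beacons, and the time derivatives of the four shape variables $\bar x_{1b1},\bar x_{1b2},\rho_{1b1},\rho_{1b2}$ all vanish. Then a circling equilibrium exists if and only if one of the following holds, and at any circling equilibrium $\bar x_{1b1}=\bar x_{1b2}=0$ and the distances are as follows. (a) If $\lambda a_{b1}=(1-\lambda)a_{b2}<0$, then $$\rho_{1b1}=\rho_{1b2}=\frac{1}{-4\mu\lambda a_{b1}}\Bigl(1+\sqrt{1+(4\mu\lambda a_{b1}b)^2}\Bigr).$$ (b) If $\lambda a_{b1}\neq(1-\lambda)a_{b2}$ and $\lambda a_{b1}+(1-\lambda)a_{b2}<0$, then $\rho_{1b1}=(\rho_{1b+}-\rho_{1b-})/2$ and $\rho_{1b2}=(\rho_{1b+}+\rho_{1b-})/2$, where $$\rho_{1b+}=\frac{1+\sqrt{1+\bigl[2b\mu(\lambda a_{b1}+(1-\lambda)a_{b2})\bigr]^2}}{-\mu\bigl(\lambda a_{b1}+(1-\lambda)a_{b2}\bigr)},\qquad \rho_{1b-}=\frac{-1+\sqrt{1+\bigl[2b\mu(\lambda a_{b1}-(1-\lambda)a_{b2})\bigr]^2}}{-\mu\bigl(\lambda a_{b1}-(1-\lambda)a_{b2}\bigr)}.$$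
   Context: Configuration I: two fixed beacons at $\mathbf r_{b1}=(0,0,-b)$ and $\mathbf r_{b2}=(0,0,b)$ in $\mathbb R^3$, and one agent with position $\mathbf r_1\in\mathbb R^3$ and unit velocity $\mathbf x_1$. Write $\mathbf r_{1bi}=\mathbf r_1-\mathbf r_{bi}$, $\rho_{1bi}=|\mathbf r_{1bi}|$, $\bar x_{1bi}=\mathbf x_1\cdot \mathbf r_{1bi}/\rho_{1bi}$ ($i=1,2$). The agent moves with unit speed under the beacon-referenced constant-bearing control law, whose closed loop is $$\dot{\mathbf r}_1=\mathbf x_1,\qquad \dot{\mathbf x}_1=-(1-\lambda)\mu(\bar x_{1b2}-a_{b2})\Bigl(\tfrac{\mathbf r_{1b2}}{\rho_{1b2}}-\bar x_{1b2}\mathbf x_1\Bigr)-\lambda\mu(\bar x_{1b1}-a_{b1})\Bigl(\tfrac{\mathbf r_{1b1}}{\rho_{1b1}}-\bar x_{1b1}\mathbf x_1\Bigr).$$ Here $\mu>0$ is a gain, $\lambda$ an attention weight and $a_{b1},a_{b2}$ the constant-bearing parameters with respect to the two beacons. The time derivatives of $\bar x_{1b1},\bar x_{1b2},\rho_{1b1},\rho_{1b2}$ along this flow depend only on these four variables (using $\frac{\mathbf r_{1b1}}{\rho_{1b1}}\cdot\frac{\mathbf r_{1b2}}{\rho_{1b2}}=\frac{\rho_{1b1}^2+\rho_{1b2}^2-4b^2}{2\rho_{1b1}\rho_{1b2}}$). *)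

theory Defs
  imports "HOL-Analysis.Analysis"
begin

definition beacon1 :: "real \<Rightarrow> real^3" where
  "beacon1 b = vector [0, 0, -b]"

definition beacon2 :: "real \<Rightarrow> real^3" where
  "beacon2 b = vector [0, 0, b]"

definition rho1b1 :: "real \<Rightarrow> (real^3) \<times> (real^3) \<Rightarrow> real" where
  "rho1b1 b s = norm (fst s - beacon1 b)"

definition rho1b2 :: "real \<Rightarrow> (real^3) \<times> (real^3) \<Rightarrow> real" where
  "rho1b2 b s = norm (fst s - beacon2 b)"

definition xbar1b1 :: "real \<Rightarrow> (real^3) \<times> (real^3) \<Rightarrow> real" where
  "xbar1b1 b s = (snd s \<bullet> (fst s - beacon1 b)) / norm (fst s - beacon1 b)"

definition xbar1b2 :: "real \<Rightarrow> (real^3) \<times> (real^3) \<Rightarrow> real" where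
  "xbar1b2 b s = (snd s \<bullet> (fst s - beacon2 b)) / norm (fst s - beacon2 b)"

definition xdot :: "real \<Rightarrow> real \<Rightarrow> real \<Rightarrow> real \<Rightarrow> real \<Rightarrow> real^3 \<Rightarrow> real^3 \<Rightarrow> real^3" where
  "xdot mu lam ab1 ab2 b r x =
     - (((1 - lam) * mu * (xbar1b2 b (r, x) - ab2)) *\<^sub>R
          ((1 / norm (r - beacon2 b)) *\<^sub>R (r - beacon2 b) - xbar1b2 b (r, x) *\<^sub>R x))
     - ((lam * mu * (xbar1b1 b (r, x) - ab1)) *\<^sub>R
          ((1 / norm (r - beacon1 b)) *\<^sub>R (r - beacon1 b) - xbar1b1 b (r, x) *\<^sub>R x))"

text \<open>Time derivative of a state function f along the closed-loop flow
  (rdot = x, xdot as above) at the state (r, x) equals D: the derivative of f along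
  the vector field, i.e. d/dt f(r + t rdot, x + t xdot) at t = 0.\<close>

definition flow_deriv ::
  "real \<Rightarrow> real \<Rightarrow> real \<Rightarrow> real \<Rightarrow> real \<Rightarrow> ((real^3) \<times> (real^3) \<Rightarrow> real)
     \<Rightarrow> real^3 \<Rightarrow> real^3 \<Rightarrow> real \<Rightarrow> bool" where
  "flow_deriv mu lam ab1 ab2 b f r x D \<longleftrightarrow>
     ((\<lambda>t. f (r + t *\<^sub>R x, x + t *\<^sub>R xdot mu lam ab1 ab2 b r x)) has_real_derivative D) (at 0)"

definition circling_equilibrium ::
  "real \<Rightarrow> real \<Rightarrow> real \<Rightarrow> real \<Rightarrow> real \<Rightarrow> real^3 \<Rightarrow> real^3 \<Rightarrow> bool" where
  "circling_equilibrium mu lam ab1 ab2 b r x \<longleftrightarrow>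
     rho1b1 b (r, x) > 0 \<and> rho1b2 b (r, x) > 0 \<and>
     \<not> collinear {r, beacon1 b, beacon2 b} \<and>
     flow_deriv mu lam ab1 ab2 b (xbar1b1 b) r x 0 \<and>
     flow_deriv mu lam ab1 ab2 b (xbar1b2 b) r x 0 \<and>
     flow_deriv mu lam ab1 ab2 b (rho1b1 b) r x 0 \<and>
     flow_deriv mu lam ab1 ab2 b (rho1b2 b) r x 0"

end

theory Submission
  imports Defs
begin

text \<open>At a circling equilibrium both bearings \<open>xbar1b1, xbar1b2\<close> vanish, so the velocity is
  orthogonal to both beacon offsets and the steering term is a combination of the two unit offsets.
  Vanishing of the bearing derivatives then becomes two equations in the distances
  \<open>\<rho>\<^sub>1 = rho1b1, \<rho>\<^sub>2 = rho1b2\<close> alone (the cosine law eliminates the angle at the agent). Their sum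
  and difference decouple into quadratics for \<open>P = \<rho>\<^sub>1 + \<rho>\<^sub>2\<close> and \<open>M = \<rho>\<^sub>2 - \<rho>\<^sub>1\<close>; the triangle
  inequalities \<open>2b \<le> P\<close> and \<open>\<bar>M\<bar> \<le> 2b\<close> select one root of each, and the root for \<open>P\<close> is
  admissible only if \<open>\<lambda>a\<^sub>b\<^sub>1 + (1 - \<lambda>)a\<^sub>b\<^sub>2 < 0\<close>. Conversely these roots satisfy the strict triangle
  inequalities, so a point at the required distances exists off the beacon axis, and the velocity
  can be taken normal to the plane through it and the beacons.\<close>

lemma has_real_derivative_norm_line:
  fixes w x :: "'a::real_inner"
  assumes "w \<noteq> 0"
  shows "((\<lambda>t. norm (w + t *\<^sub>R x)) has_real_derivative (w \<bullet> x / norm w)) (at 0)"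
proof -
  have line: "((\<lambda>t. w + t *\<^sub>R x) has_derivative (\<lambda>h. h *\<^sub>R x)) (at 0)"
    by (auto intro!: derivative_eq_intros)
  have "((\<lambda>t. norm (w + t *\<^sub>R x)) has_derivative (\<lambda>h. (h *\<^sub>R x) \<bullet> sgn w)) (at 0)"
    using has_derivative_compose[OF line has_derivative_norm] assms by simp
  then show ?thesis
    by (rule has_derivative_imp_has_field_derivative) (simp add: sgn_div_norm inner_commute field_simps)
qed

lemma has_real_derivative_normalized_inner_line:
  fixes w x v :: "'a::real_inner"
  assumes "w \<noteq> 0"
  shows "((\<lambda>t. (x + t *\<^sub>R v) \<bullet> (w + t *\<^sub>R x) / norm (w + t *\<^sub>R x)) has_real_derivative
     (x \<bullet> x + v \<bullet> w - (x \<bullet> w / norm w)\<^sup>2) / norm w) (at 0)"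
proof -
  have "((\<lambda>t. (x + t *\<^sub>R v) \<bullet> (w + t *\<^sub>R x)) has_real_derivative x \<bullet> x + v \<bullet> w) (at 0)"
    by (auto intro!: derivative_eq_intros has_derivative_imp_has_field_derivative
             simp: inner_commute algebra_simps)
  from DERIV_divide[OF this has_real_derivative_norm_line[OF assms]] assms
  have "((\<lambda>t. (x + t *\<^sub>R v) \<bullet> (w + t *\<^sub>R x) / norm (w + t *\<^sub>R x)) has_real_derivative
     ((x \<bullet> x + v \<bullet> w) * norm w - (x \<bullet> w) * (w \<bullet> x / norm w)) / (norm w * norm w)) (at 0)"
    by simp
  moreover have "norm w \<noteq> 0" using assms by simp
  ultimately show ?thesis
    by (simp add: power2_eq_square inner_commute field_simps)
qed

lemma flow_deriv_distance_iff:
  assumes "r \<noteq> c"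
  shows "flow_deriv mu lam ab1 ab2 b (\<lambda>s. norm (fst s - c)) r x D \<longleftrightarrow>
    D = (r - c) \<bullet> x / norm (r - c)"
proof -
  have "(\<lambda>t. norm (fst (r + t *\<^sub>R x, x + t *\<^sub>R xdot mu lam ab1 ab2 b r x) - c)) =
      (\<lambda>t. norm ((r - c) + t *\<^sub>R x))"
    by (simp add: algebra_simps)
  then show ?thesis
    unfolding flow_deriv_def
    using has_real_derivative_norm_line[of "r - c" x] assms DERIV_unique by auto
qed

lemma flow_deriv_bearing_iff:
  assumes "r \<noteq> c"
  shows "flow_deriv mu lam ab1 ab2 b (\<lambda>s. snd s \<bullet> (fst s - c) / norm (fst s - c)) r x D \<longleftrightarrow>
    D = (x \<bullet> x + xdot mu lam ab1 ab2 b r x \<bullet> (r - c) - (x \<bullet> (r - c) / norm (r - c))\<^sup>2) / norm (r - c)"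
proof -
  let ?v = "xdot mu lam ab1 ab2 b r x"
  have "(\<lambda>t. snd (r + t *\<^sub>R x, x + t *\<^sub>R ?v) \<bullet> (fst (r + t *\<^sub>R x, x + t *\<^sub>R ?v) - c) /
        norm (fst (r + t *\<^sub>R x, x + t *\<^sub>R ?v) - c)) =
      (\<lambda>t. (x + t *\<^sub>R ?v) \<bullet> ((r - c) + t *\<^sub>R x) / norm ((r - c) + t *\<^sub>R x))"
    by (simp add: algebra_simps)
  then show ?thesis
    unfolding flow_deriv_def
    using has_real_derivative_normalized_inner_line[of "r - c" x ?v] assms DERIV_unique by auto
qed

lemma xdot_perpendicular:
  assumes "x \<bullet> (r - beacon1 b) = 0" "x \<bullet> (r - beacon2 b) = 0"
  shows "xdot mu lam ab1 ab2 b r x =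
    ((1 - lam) * mu * ab2 / norm (r - beacon2 b)) *\<^sub>R (r - beacon2 b) +
    (lam * mu * ab1 / norm (r - beacon1 b)) *\<^sub>R (r - beacon1 b)"
proof -
  have "xbar1b1 b (r, x) = 0" "xbar1b2 b (r, x) = 0"
    using assms by (simp_all add: xbar1b1_def xbar1b2_def)
  then show ?thesis
    unfolding xdot_def by simp
qed

lemma circling_equilibrium_iff:
  fixes r x :: "real^3" and b :: real
  assumes "norm x = 1"
  defines "w1 \<equiv> r - beacon1 b" and "w2 \<equiv> r - beacon2 b"
  shows "circling_equilibrium mu lam ab1 ab2 b r x \<longleftrightarrow>
    \<not> collinear {r, beacon1 b, beacon2 b} \<and> x \<bullet> w1 = 0 \<and> x \<bullet> w2 = 0 \<and>
    xdot mu lam ab1 ab2 b r x \<bullet> w1 = -1 \<and> xdot mu lam ab1 ab2 b r x \<bullet> w2 = -1"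
proof (cases "collinear {r, beacon1 b, beacon2 b}")
  case True
  then show ?thesis by (simp add: circling_equilibrium_def)
next
  case False
  then have "r \<noteq> beacon1 b" "r \<noteq> beacon2 b" by (auto simp: insert_commute)
  then have n1: "norm w1 > 0" and n2: "norm w2 > 0" by (simp_all add: w1_def w2_def)
  have "rho1b1 b = (\<lambda>s. norm (fst s - beacon1 b))" "rho1b2 b = (\<lambda>s. norm (fst s - beacon2 b))"
    "xbar1b1 b = (\<lambda>s. snd s \<bullet> (fst s - beacon1 b) / norm (fst s - beacon1 b))"
    "xbar1b2 b = (\<lambda>s. snd s \<bullet> (fst s - beacon2 b) / norm (fst s - beacon2 b))"
    by (simp_all add: fun_eq_iff rho1b1_def rho1b2_def xbar1b1_def xbar1b2_def)
  moreover have "x \<bullet> x = 1" using assms(1) by (simp add: dot_square_norm)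
  ultimately show ?thesis
    using False n1 n2 \<open>r \<noteq> beacon1 b\<close> \<open>r \<noteq> beacon2 b\<close>
    unfolding circling_equilibrium_def
    by (auto simp: flow_deriv_distance_iff flow_deriv_bearing_iff w1_def[symmetric] w2_def[symmetric]
        inner_commute[of w1] inner_commute[of w2] rho1b1_def rho1b2_def add_eq_0_iff)
qed

lemma norm_beacon_diff: "norm (beacon2 b - beacon1 b) = 2 * \<bar>b\<bar>"
  by (simp add: beacon1_def beacon2_def norm_eq_sqrt_inner inner_vec_def sum_3 real_sqrt_mult
      flip: power2_eq_square)

lemma inner_beacon_offsets:
  "(r - beacon1 b) \<bullet> (r - beacon2 b) =
    ((norm (r - beacon1 b))\<^sup>2 + (norm (r - beacon2 b))\<^sup>2 - (2 * b)\<^sup>2) / 2"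
proof -
  have "(r - beacon1 b) - (r - beacon2 b) = beacon2 b - beacon1 b" by simp
  then show ?thesis
    using dot_norm_neg[of "r - beacon1 b" "r - beacon2 b"]
    by (simp add: norm_beacon_diff power_mult_distrib)
qed

lemma not_collinear_beacons:
  assumes "b \<noteq> 0" "r $ 1 \<noteq> 0"
  shows "\<not> collinear {r, beacon1 b, beacon2 b}"
proof
  assume "collinear {r, beacon1 b, beacon2 b}"
  then have "collinear {beacon1 b, r, beacon2 b}" by (simp add: insert_commute)
  moreover have "beacon1 b \<noteq> beacon2 b"
    using norm_beacon_diff[of b] assms(1) by auto
  ultimately obtain u where "r = u *\<^sub>R beacon1 b + (1 - u) *\<^sub>R beacon2 b"
    by (auto simp: collinear_3_expand)
  then have "r $ 1 = 0" by (simp add: beacon1_def beacon2_def)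
  with assms(2) show False ..
qed

lemma norm_vector_3: "norm (vector [x, y, z] :: real^3) = sqrt (x\<^sup>2 + y\<^sup>2 + z\<^sup>2)"
  by (simp add: norm_eq_sqrt_inner inner_vec_def sum_3 power2_eq_square)

lemma exists_perpendicular_point_at_distances:
  assumes "b > 0" "\<bar>p1 - p2\<bar> < 2 * b" "2 * b < p1 + p2"
  obtains r x :: "real^3"
  where "norm x = 1" "norm (r - beacon1 b) = p1" "norm (r - beacon2 b) = p2"
    "x \<bullet> (r - beacon1 b) = 0" "x \<bullet> (r - beacon2 b) = 0"
    "\<not> collinear {r, beacon1 b, beacon2 b}"
proof -
  define z where "z = (p1\<^sup>2 - p2\<^sup>2) / (4 * b)"
  \<comment> \<open>Heron: the triangle with sides \<open>2 b\<close>, \<open>p1\<close>, \<open>p2\<close> is nondegenerate.\<close>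
  have "16 * b\<^sup>2 * (p1\<^sup>2 - (z + b)\<^sup>2) =
      (p2 - p1 + 2 * b) * (p2 + p1 - 2 * b) * (p1 + 2 * b - p2) * (p1 + 2 * b + p2)"
    using assms(1) by (simp add: z_def power2_eq_square field_simps)
  also have "\<dots> > 0" using assms by (intro mult_pos_pos) auto
  finally have "p1\<^sup>2 - (z + b)\<^sup>2 > 0" using assms(1) by (simp add: zero_less_mult_iff)
  then obtain h where h: "h > 0" "h\<^sup>2 = p1\<^sup>2 - (z + b)\<^sup>2"
    by (metis real_sqrt_gt_zero real_sqrt_pow2 less_le)
  define r :: "real^3" where "r = vector [h, 0, z]"
  define x :: "real^3" where "x = vector [0, 1, 0]"
  have r1: "r - beacon1 b = vector [h, 0, z + b]" and r2: "r - beacon2 b = vector [h, 0, z - b]"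
    by (simp_all add: r_def beacon1_def beacon2_def vec_eq_iff forall_3)
  have "h\<^sup>2 + (z + b)\<^sup>2 = p1\<^sup>2" using h(2) by simp
  moreover have "h\<^sup>2 + (z - b)\<^sup>2 = p2\<^sup>2"
    unfolding h(2) z_def using assms(1) by (simp add: power2_eq_square field_simps)
  moreover have "p1 > 0" "p2 > 0" "r $ 1 \<noteq> 0" using assms h(1) by (auto simp: r_def)
  ultimately show ?thesis
    using assms(1)
    by (intro that[of x r]) (simp_all add: r1 r2 norm_vector_3 x_def inner_vec_def sum_3
        not_collinear_beacons)
qed

lemma equilibrium_equations_iff:
  fixes k1 k2 p1 p2 a :: real
  assumes "p1 > 0" "p2 > 0"
  defines "c \<equiv> (p1\<^sup>2 + p2\<^sup>2 - a\<^sup>2) / 2"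
  shows "(k2 * c / p2 + k1 * p1 = -1 \<and> k2 * p2 + k1 * c / p1 = -1) \<longleftrightarrow>
    ((k1 + k2) * ((p1 + p2)\<^sup>2 - a\<^sup>2) = -2 * (p1 + p2) \<and>
     (k1 - k2) * (a\<^sup>2 - (p2 - p1)\<^sup>2) = -2 * (p2 - p1))"
proof -
  define X where "X = k2 * c + k1 * p1 * p2"
  define Y where "Y = k2 * p1 * p2 + k1 * c"
  have "k2 * c / p2 + k1 * p1 = -1 \<longleftrightarrow> X = - p2"
    using assms(2) by (simp add: X_def field_simps)
  moreover have "k2 * p2 + k1 * c / p1 = -1 \<longleftrightarrow> Y = - p1"
    using assms(1) by (simp add: Y_def field_simps)
  moreover have "(k1 + k2) * ((p1 + p2)\<^sup>2 - a\<^sup>2) = 2 * (X + Y)"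
    and "(k1 - k2) * (a\<^sup>2 - (p2 - p1)\<^sup>2) = 2 * (X - Y)"
    by (simp_all add: X_def Y_def c_def power2_eq_square field_simps)
  ultimately show ?thesis by auto
qed

text \<open>With \<open>a = 2b\<close> and \<open>k = \<mu>(\<lambda>a\<^sub>b\<^sub>1 \<plusminus> (1 - \<lambda>)a\<^sub>b\<^sub>2)\<close> these are the paper's \<open>\<rho>\<^sub>1\<^sub>b\<^sub>+\<close> and \<open>\<rho>\<^sub>1\<^sub>b\<^sub>-\<close>:
  the root \<open>y \<ge> a\<close> of \<open>k(y\<^sup>2 - a\<^sup>2) = -2y\<close> and the root \<open>\<bar>y\<bar> \<le> a\<close> of \<open>k(a\<^sup>2 - y\<^sup>2) = -2y\<close>.
  For \<open>k = 0\<close> division by zero gives \<open>rho_minus a 0 = 0\<close>, which is then the right root.\<close>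

definition rho_plus :: "real \<Rightarrow> real \<Rightarrow> real" where
  "rho_plus a k = (1 + sqrt (1 + (a * k)\<^sup>2)) / (- k)"

definition rho_minus :: "real \<Rightarrow> real \<Rightarrow> real" where
  "rho_minus a k = (-1 + sqrt (1 + (a * k)\<^sup>2)) / (- k)"

lemma sqrt_one_plus_square_gt: "\<bar>s\<bar> < sqrt (1 + s\<^sup>2)"
  by (rule real_less_rsqrt) simp

lemma rho_plus_gt:
  assumes "k < 0"
  shows "a < rho_plus a k"
proof -
  have "a * - k \<le> \<bar>a * k\<bar>" by linarith
  also have "\<dots> < 1 + sqrt (1 + (a * k)\<^sup>2)"
    using sqrt_one_plus_square_gt[of "a * k"] by linarith
  finally have "a < (1 + sqrt (1 + (a * k)\<^sup>2)) / (- k)"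
    using assms by (subst pos_less_divide_eq) auto
  then show ?thesis unfolding rho_plus_def .
qed

lemma abs_rho_minus_less:
  assumes "a > 0"
  shows "\<bar>rho_minus a k\<bar> < a"
proof (cases "k = 0")
  case False
  let ?q = "sqrt (1 + (a * k)\<^sup>2)"
  have "?q\<^sup>2 < (1 + \<bar>a * k\<bar>)\<^sup>2"
    using False assms by (simp add: power2_eq_square abs_mult algebra_simps)
  then have "?q < 1 + \<bar>a * k\<bar>"
    by (rule power_less_imp_less_base) simp
  moreover have "1 \<le> ?q" by simp
  ultimately have "(?q - 1) / \<bar>k\<bar> < a"
    using False assms by (simp add: pos_divide_less_eq abs_mult)
  then show ?thesis
    using \<open>1 \<le> ?q\<close> by (simp add: rho_minus_def)
qed (use assms in \<open>simp add: rho_minus_def\<close>)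

lemma rho_plus_equation:
  assumes "k \<noteq> 0"
  shows "k * ((rho_plus a k)\<^sup>2 - a\<^sup>2) = -2 * rho_plus a k"
proof -
  define q where "q = sqrt (1 + (a * k)\<^sup>2)"
  have q: "q\<^sup>2 = 1 + (a * k)\<^sup>2" unfolding q_def by simp
  have k_rho: "k * rho_plus a k = - (1 + q)"
    using assms by (simp add: rho_plus_def q_def)
  have "k * (k * ((rho_plus a k)\<^sup>2 - a\<^sup>2)) = (k * rho_plus a k)\<^sup>2 - q\<^sup>2 + 1"
    unfolding q by (simp add: power2_eq_square algebra_simps)
  also have "\<dots> = k * (-2 * rho_plus a k)"
    unfolding mult.left_commute[of k] k_rho by (simp add: power2_eq_square algebra_simps)
  finally show ?thesis using assms by (metis mult_left_cancel)
qed

lemma rho_minus_equation: "k * (a\<^sup>2 - (rho_minus a k)\<^sup>2) = -2 * rho_minus a k"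
proof (cases "k = 0")
  case False
  define q where "q = sqrt (1 + (a * k)\<^sup>2)"
  have q: "q\<^sup>2 = 1 + (a * k)\<^sup>2" unfolding q_def by simp
  have k_rho: "k * rho_minus a k = 1 - q"
    using False by (simp add: rho_minus_def q_def)
  have "k * (k * (a\<^sup>2 - (rho_minus a k)\<^sup>2)) = q\<^sup>2 - 1 - (k * rho_minus a k)\<^sup>2"
    unfolding q by (simp add: power2_eq_square algebra_simps)
  also have "\<dots> = k * (-2 * rho_minus a k)"
    unfolding mult.left_commute[of k] k_rho by (simp add: power2_eq_square algebra_simps)
  finally show ?thesis using False by (metis mult_left_cancel)
qed (simp add: rho_minus_def)

lemma rho_plus_unique:
  assumes "0 < a" "a \<le> y" and eq: "k * (y\<^sup>2 - a\<^sup>2) = -2 * y"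
  shows "k < 0 \<and> y = rho_plus a k"
proof -
  have g: "y\<^sup>2 - a\<^sup>2 \<ge> 0" using assms by (simp add: power_mono)
  have "(k * y + 1) * (y\<^sup>2 - a\<^sup>2) = y * (k * (y\<^sup>2 - a\<^sup>2)) + (y\<^sup>2 - a\<^sup>2)"
    by (simp add: algebra_simps)
  also have "\<dots> = - (y\<^sup>2 + a\<^sup>2)"
    unfolding eq by (simp add: power2_eq_square)
  also have "\<dots> < 0"
    using \<open>0 < a\<close> zero_le_power2[of y] zero_less_power2[of a] by linarith
  finally have neg: "k * y + 1 < 0" using g by (simp add: mult_less_0_iff)
  then have k: "k < 0"
    using assms by (smt (verit) mult_nonneg_nonneg)
  have "(k * y + 1)\<^sup>2 = k * (k * (y\<^sup>2 - a\<^sup>2)) + 2 * k * y + 1 + (a * k)\<^sup>2"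
    by (simp add: power2_eq_square algebra_simps)
  also have "\<dots> = 1 + (a * k)\<^sup>2" unfolding eq by (simp add: algebra_simps)
  finally have "sqrt (1 + (a * k)\<^sup>2) = - (k * y + 1)"
    using neg by (metis real_sqrt_abs abs_of_neg)
  then show ?thesis
    using k by (simp add: rho_plus_def field_simps)
qed

lemma rho_minus_unique:
  assumes "0 < a" "\<bar>y\<bar> \<le> a" and eq: "k * (a\<^sup>2 - y\<^sup>2) = -2 * y"
  shows "y = rho_minus a k"
proof (cases "k = 0")
  case False
  have "\<bar>y\<bar>\<^sup>2 \<le> a\<^sup>2" by (rule power_mono) (use assms in auto)
  then have g: "a\<^sup>2 - y\<^sup>2 \<ge> 0" by simp
  have "(1 - k * y) * (a\<^sup>2 - y\<^sup>2) = (a\<^sup>2 - y\<^sup>2) - y * (k * (a\<^sup>2 - y\<^sup>2))"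
    by (simp add: algebra_simps)
  also have "\<dots> = y\<^sup>2 + a\<^sup>2"
    unfolding eq by (simp add: power2_eq_square)
  also have "\<dots> > 0" using assms by (simp add: add_nonneg_pos)
  finally have pos: "1 - k * y > 0" using g by (simp add: zero_less_mult_iff)
  have "(1 - k * y)\<^sup>2 = - k * (k * (a\<^sup>2 - y\<^sup>2)) - 2 * k * y + 1 + (a * k)\<^sup>2"
    by (simp add: power2_eq_square algebra_simps)
  also have "\<dots> = 1 + (a * k)\<^sup>2" unfolding eq by (simp add: algebra_simps)
  finally have "sqrt (1 + (a * k)\<^sup>2) = 1 - k * y"
    using pos by (metis real_sqrt_abs abs_of_pos)
  then show ?thesis
    using False by (simp add: rho_minus_def field_simps)
qed (use eq in \<open>simp add: rho_minus_def\<close>)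

lemma rho_plus_rho_minus_equations_iff:
  assumes "0 < a" "a \<le> p" "\<bar>m\<bar> \<le> a"
  shows "(k * (p\<^sup>2 - a\<^sup>2) = -2 * p \<and> d * (a\<^sup>2 - m\<^sup>2) = -2 * m) \<longleftrightarrow>
    (k < 0 \<and> p = rho_plus a k \<and> m = rho_minus a d)"
  using assms rho_plus_unique rho_minus_unique rho_plus_equation[of k a] rho_minus_equation[of d a]
  by auto

lemma circling_equilibrium_iff_quadratics:
  fixes r x :: "real^3" and mu lam ab1 ab2 b :: real
  assumes "norm x = 1"
  defines "w1 \<equiv> r - beacon1 b" and "w2 \<equiv> r - beacon2 b"
  defines "k1 \<equiv> mu * (lam * ab1)" and "k2 \<equiv> mu * ((1 - lam) * ab2)"
  shows "circling_equilibrium mu lam ab1 ab2 b r x \<longleftrightarrow>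
    \<not> collinear {r, beacon1 b, beacon2 b} \<and> x \<bullet> w1 = 0 \<and> x \<bullet> w2 = 0 \<and>
    (k1 + k2) * ((norm w1 + norm w2)\<^sup>2 - (2 * b)\<^sup>2) = -2 * (norm w1 + norm w2) \<and>
    (k1 - k2) * ((2 * b)\<^sup>2 - (norm w2 - norm w1)\<^sup>2) = -2 * (norm w2 - norm w1)"
proof (cases "\<not> collinear {r, beacon1 b, beacon2 b} \<and> x \<bullet> w1 = 0 \<and> x \<bullet> w2 = 0")
  case False
  then show ?thesis
    using circling_equilibrium_iff[OF assms(1)] unfolding w1_def w2_def by blast
next
  case True
  then have "r \<noteq> beacon1 b" "r \<noteq> beacon2 b" by (auto simp: insert_commute)
  then have n1: "norm w1 > 0" and n2: "norm w2 > 0" by (simp_all add: w1_def w2_def)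
  let ?c = "((norm w1)\<^sup>2 + (norm w2)\<^sup>2 - (2 * b)\<^sup>2) / 2"
  have c: "w1 \<bullet> w2 = ?c" unfolding w1_def w2_def by (rule inner_beacon_offsets)
  have "xdot mu lam ab1 ab2 b r x = (k2 / norm w2) *\<^sub>R w2 + (k1 / norm w1) *\<^sub>R w1"
    using xdot_perpendicular[of x r b mu lam ab1 ab2] True
    unfolding w1_def w2_def k1_def k2_def by (simp add: ac_simps)
  then have "xdot mu lam ab1 ab2 b r x \<bullet> w1 = k2 * ?c / norm w2 + k1 * norm w1"
    and "xdot mu lam ab1 ab2 b r x \<bullet> w2 = k2 * norm w2 + k1 * ?c / norm w1"
    unfolding c[symmetric] using n1 n2
    by (simp_all add: inner_add_left inner_commute[of w2 w1] dot_square_norm power2_eq_square)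
  moreover have "circling_equilibrium mu lam ab1 ab2 b r x \<longleftrightarrow>
      xdot mu lam ab1 ab2 b r x \<bullet> w1 = -1 \<and> xdot mu lam ab1 ab2 b r x \<bullet> w2 = -1"
    using circling_equilibrium_iff[OF assms(1)] True unfolding w1_def w2_def by simp
  ultimately have "circling_equilibrium mu lam ab1 ab2 b r x \<longleftrightarrow>
      k2 * ?c / norm w2 + k1 * norm w1 = -1 \<and> k2 * norm w2 + k1 * ?c / norm w1 = -1"
    by (simp only:)
  also have "\<dots> \<longleftrightarrow>
      (k1 + k2) * ((norm w1 + norm w2)\<^sup>2 - (2 * b)\<^sup>2) = -2 * (norm w1 + norm w2) \<and>
      (k1 - k2) * ((2 * b)\<^sup>2 - (norm w2 - norm w1)\<^sup>2) = -2 * (norm w2 - norm w1)"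
    by (rule equilibrium_equations_iff[OF n1 n2])
  finally show ?thesis using True by simp
qed

lemma circling_equilibrium_iff_distances:
  fixes r x :: "real^3" and mu lam ab1 ab2 b :: real
  assumes "norm x = 1" "b > 0"
  defines "w1 \<equiv> r - beacon1 b" and "w2 \<equiv> r - beacon2 b"
  defines "k1 \<equiv> mu * (lam * ab1)" and "k2 \<equiv> mu * ((1 - lam) * ab2)"
  shows "circling_equilibrium mu lam ab1 ab2 b r x \<longleftrightarrow>
    \<not> collinear {r, beacon1 b, beacon2 b} \<and> x \<bullet> w1 = 0 \<and> x \<bullet> w2 = 0 \<and>
    k1 + k2 < 0 \<and> norm w1 + norm w2 = rho_plus (2 * b) (k1 + k2) \<and>
    norm w2 - norm w1 = rho_minus (2 * b) (k1 - k2)"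
proof -
  have "w1 - w2 = beacon2 b - beacon1 b" by (simp add: w1_def w2_def)
  then have "2 * b \<le> norm w1 + norm w2" "\<bar>norm w2 - norm w1\<bar> \<le> 2 * b"
    using norm_triangle_ineq4[of w1 w2] norm_triangle_ineq3[of w2 w1] norm_beacon_diff[of b]
      assms(2) by (simp_all add: norm_minus_commute)
  then show ?thesis
    using assms(2) circling_equilibrium_iff_quadratics[OF assms(1), of mu lam ab1 ab2 b r]
      rho_plus_rho_minus_equations_iff[of "2 * b" "norm w1 + norm w2" "norm w2 - norm w1"]
    unfolding w1_def w2_def k1_def k2_def by auto
qed

lemma ex_circling_equilibrium_iff:
  assumes "b > 0"
  shows "(\<exists>r x. norm x = 1 \<and> circling_equilibrium mu lam ab1 ab2 b r x) \<longleftrightarrow>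
    mu * (lam * ab1) + mu * ((1 - lam) * ab2) < 0"
proof
  assume "\<exists>r x. norm x = 1 \<and> circling_equilibrium mu lam ab1 ab2 b r x"
  then show "mu * (lam * ab1) + mu * ((1 - lam) * ab2) < 0"
    using circling_equilibrium_iff_distances[OF _ assms] by blast
next
  assume neg: "mu * (lam * ab1) + mu * ((1 - lam) * ab2) < 0"
  define P where "P = rho_plus (2 * b) (mu * (lam * ab1) + mu * ((1 - lam) * ab2))"
  define M where "M = rho_minus (2 * b) (mu * (lam * ab1) - mu * ((1 - lam) * ab2))"
  have "2 * b < P" "\<bar>M\<bar> < 2 * b"
    using rho_plus_gt[OF neg] abs_rho_minus_less assms by (simp_all add: P_def M_def)
  then have "\<bar>(P - M) / 2 - (P + M) / 2\<bar> < 2 * b" "2 * b < (P - M) / 2 + (P + M) / 2"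
    by (simp_all add: field_simps)
  then obtain r x :: "real^3"
    where "norm x = 1" "norm (r - beacon1 b) = (P - M) / 2" "norm (r - beacon2 b) = (P + M) / 2"
      "x \<bullet> (r - beacon1 b) = 0" "x \<bullet> (r - beacon2 b) = 0"
      "\<not> collinear {r, beacon1 b, beacon2 b}"
    by (rule exists_perpendicular_point_at_distances[OF assms])
  then have "circling_equilibrium mu lam ab1 ab2 b r x"
    using assms neg by (simp add: circling_equilibrium_iff_distances P_def M_def)
  with \<open>norm x = 1\<close> show "\<exists>r x. norm x = 1 \<and> circling_equilibrium mu lam ab1 ab2 b r x"
    by blast
qed

lemma circling_equilibrium_shape:
  assumes "norm x = 1" "b > 0" "circling_equilibrium mu lam ab1 ab2 b r x"
  defines "P \<equiv> rho_plus (2 * b) (mu * (lam * ab1) + mu * ((1 - lam) * ab2))"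
    and "M \<equiv> rho_minus (2 * b) (mu * (lam * ab1) - mu * ((1 - lam) * ab2))"
  shows "xbar1b1 b (r, x) = 0 \<and> xbar1b2 b (r, x) = 0 \<and>
    rho1b1 b (r, x) = (P - M) / 2 \<and> rho1b2 b (r, x) = (P + M) / 2"
  using assms circling_equilibrium_iff_distances[OF assms(1,2)]
  by (auto simp: rho1b1_def rho1b2_def xbar1b1_def xbar1b2_def field_simps)

theorem proposition3p1:
  fixes mu lam ab1 ab2 b :: real
  assumes "mu > 0" and "0 < lam" and "lam < 1"
    and "ab1 \<in> {-1..1}" and "ab2 \<in> {-1..1}" and "b > 0"
  defines "sp \<equiv> lam * ab1 + (1 - lam) * ab2"
    and "sm \<equiv> lam * ab1 - (1 - lam) * ab2"
  defines "rp \<equiv> (1 + sqrt (1 + (2 * b * mu * sp)\<^sup>2)) / (- mu * sp)"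
    and "rm \<equiv> (-1 + sqrt (1 + (2 * b * mu * sm)\<^sup>2)) / (- mu * sm)"
  shows "((\<exists>r x. norm x = 1 \<and> circling_equilibrium mu lam ab1 ab2 b r x) \<longleftrightarrow>
            ((lam * ab1 = (1 - lam) * ab2 \<and> lam * ab1 < 0) \<or>
             (lam * ab1 \<noteq> (1 - lam) * ab2 \<and> sp < 0)))
         \<and> (\<forall>r x. norm x = 1 \<and> circling_equilibrium mu lam ab1 ab2 b r x \<longrightarrow>
              xbar1b1 b (r, x) = 0 \<and> xbar1b2 b (r, x) = 0 \<and>
              (lam * ab1 = (1 - lam) * ab2 \<and> lam * ab1 < 0 \<longrightarrow>
                 rho1b1 b (r, x) = (1 + sqrt (1 + (4 * mu * lam * ab1 * b)\<^sup>2)) / (- 4 * mu * lam * ab1) \<and>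
                 rho1b2 b (r, x) = (1 + sqrt (1 + (4 * mu * lam * ab1 * b)\<^sup>2)) / (- 4 * mu * lam * ab1)) \<and>
              (lam * ab1 \<noteq> (1 - lam) * ab2 \<and> sp < 0 \<longrightarrow>
                 rho1b1 b (r, x) = (rp - rm) / 2 \<and> rho1b2 b (r, x) = (rp + rm) / 2))"
proof -
  let ?T = "(1 + sqrt (1 + (4 * mu * lam * ab1 * b)\<^sup>2)) / (- 4 * mu * lam * ab1)"
  have rp: "rp = rho_plus (2 * b) (mu * (lam * ab1) + mu * ((1 - lam) * ab2))"
    and rm: "rm = rho_minus (2 * b) (mu * (lam * ab1) - mu * ((1 - lam) * ab2))"
    by (simp_all add: rp_def rm_def rho_plus_def rho_minus_def sp_def sm_def algebra_simps)
  have exists: "(\<exists>r x. norm x = 1 \<and> circling_equilibrium mu lam ab1 ab2 b r x) \<longleftrightarrow> sp < 0"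
    using ex_circling_equilibrium_iff[OF assms(6)] assms(1)
    by (simp add: sp_def mult_less_0_iff flip: distrib_left)
  have cases: "sp < 0 \<longleftrightarrow> (lam * ab1 = (1 - lam) * ab2 \<and> lam * ab1 < 0) \<or>
      (lam * ab1 \<noteq> (1 - lam) * ab2 \<and> sp < 0)"
    unfolding sp_def by linarith
  have equal_weights: "(rp - rm) / 2 = ?T \<and> (rp + rm) / 2 = ?T" if "lam * ab1 = (1 - lam) * ab2"
  proof -
    have "sp = 2 * (lam * ab1)" "sm = 0" using that by (simp_all add: sp_def sm_def)
    then show ?thesis by (simp add: rp_def rm_def ac_simps)
  qed
  have shape: "xbar1b1 b (r, x) = 0 \<and> xbar1b2 b (r, x) = 0 \<and>
      (lam * ab1 = (1 - lam) * ab2 \<and> lam * ab1 < 0 \<longrightarrow>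
        rho1b1 b (r, x) = ?T \<and> rho1b2 b (r, x) = ?T) \<and>
      (lam * ab1 \<noteq> (1 - lam) * ab2 \<and> sp < 0 \<longrightarrow>
        rho1b1 b (r, x) = (rp - rm) / 2 \<and> rho1b2 b (r, x) = (rp + rm) / 2)"
    if "norm x = 1 \<and> circling_equilibrium mu lam ab1 ab2 b r x" for r x
    using that circling_equilibrium_shape[OF _ assms(6), of x mu lam ab1 ab2 r, folded rp rm]
      equal_weights by metis
  show ?thesis using exists cases shape by blast
qed

end
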